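(* Let $(M,S)$ be a covered map and $(M^*,\bar S)$ its dual covered map. If the mobile $B=\Psi_2(M,S)$ is $(H',\pi,\alpha')$ with root $i$, then the mobile $\Psi_2(M^*,\bar S)$ is (isomorphic to) the map $(H',\pi^{-1},\alpha')$ with root $o=\alpha'(i)$.
   Context: Permutations compose right to left. A map is $M=(H,\sigma,\alpha)$, $H$ finite, $\alpha$ fixed-point-free involution, $\sigma$ permutation, $\langle\sigma,\alpha\rangle$ transitive, root $r\in H$, up to root-preserving relabelling; $\phi=\sigma\alpha$; dual $M^*=(H,\phi,\alpha)$ with the same root. $\pi_{|S}$ is obtained from the cycles of $\pi$ by erasing elements not in $S$. A covered map is $(M,S)$ with $S$ stable by $\alpha$ and $(S,\sigma_{|S},\alpha_{|S})$ a connecting unicellular map ($\sigma_{|S},\alpha_{|S}$ transitive on $S$, $S$ meets every cycle of $\sigma$ — $S=\emptyset$ allowed if $\sigma$ has one cycle — and $\sigma_{|S}\alpha_{|S}$ cyclic); its dual is $(M^*,H\setminus S)$. The motion function $\theta(h)=\sigma\alpha(h)$ ($h\in S$), $\sigma(h)$ ($h\notin S$) is cyclic and defines the order $r\prec_S\theta(r)\prec_S\cdots$. $\Delta(M,S)=(M,(I,O))$ with $I=\{h\in S:\alpha(h)\prec_S h\}\cup\{h\notin S:h\prec_S\alpha(h)\}$, $O=H\setminus I$. Unfolding of an oriented map $(M,(I,O))$: new elements $i,o\notin H$, $H'=H\cup\{i,o\}$, $I'=I\cup\{i\}$, $O'=O\cup\{o\}$, $\alpha'$ extends $\alpha$ with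 $\alpha'(i)=o$; $\sigma'$ inserts $i$ just before $r$ in the cycle of $\sigma$ containing $r$ and fixes $o$; $\phi'$ inserts $o$ just before $r$ in the cycle of $\phi$ containing $r$ and fixes $i$; $\pi_\circ=\sigma'_{|I'}$, $\pi_\bullet=\phi'_{|O'}$ (extended by the identity), $\pi=\pi_\circ\pi_\bullet^{-1}$. The mobile is $\Lambda_2(M,(I,O))=(H',\pi,\alpha')$ rooted at $i$, and $\Psi_2=\Lambda_2\circ\Delta$. *)

theory Defs
  imports "HOL-Combinatorics.Permutations"
begin

text \<open>Permutations of a carrier H are functions on 'a that permute H
  (identity outside H). Composition is right to left: (f \<circ> g) h = f (g h).\<close>

definition gen_transitive :: "'a set \<Rightarrow> ('a \<Rightarrow> 'a) set \<Rightarrow> bool" where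
  "gen_transitive A F \<longleftrightarrow>
     (\<forall>h\<in>A. \<forall>k\<in>A. (h, k) \<in> {(x, f x) | x f. x \<in> A \<and> f \<in> F}\<^sup>*)"

definition cyclic_on :: "'a set \<Rightarrow> ('a \<Rightarrow> 'a) \<Rightarrow> bool" where
  "cyclic_on A f \<longleftrightarrow> (\<forall>h\<in>A. \<forall>k\<in>A. \<exists>n. (f ^^ n) h = k)"

text \<open>Restriction of a permutation to S: erase elements not in S from the cycles;
  identity outside S.\<close>
definition restr :: "('a \<Rightarrow> 'a) \<Rightarrow> 'a set \<Rightarrow> 'a \<Rightarrow> 'a" where
  "restr p S h = (if h \<in> S then (p ^^ (LEAST k. 0 < k \<and> (p ^^ k) h \<in> S)) h else h)"

definition is_map :: "'a set \<Rightarrow> ('a \<Rightarrow> 'a) \<Rightarrow> ('a \<Rightarrow> 'a) \<Rightarrow> 'a \<Rightarrow> bool" where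
  "is_map H \<sigma> \<alpha> r \<longleftrightarrow> finite H \<and> \<sigma> permutes H \<and> \<alpha> permutes H
     \<and> (\<forall>h\<in>H. \<alpha> h \<noteq> h \<and> \<alpha> (\<alpha> h) = h)
     \<and> gen_transitive H {\<sigma>, \<alpha>} \<and> r \<in> H"

definition connecting_unicellular :: "'a set \<Rightarrow> ('a \<Rightarrow> 'a) \<Rightarrow> ('a \<Rightarrow> 'a) \<Rightarrow> 'a set \<Rightarrow> bool" where
  "connecting_unicellular H \<sigma> \<alpha> S \<longleftrightarrow>
     gen_transitive S {restr \<sigma> S, restr \<alpha> S}
     \<and> ((\<forall>h\<in>H. \<exists>n. (\<sigma> ^^ n) h \<in> S) \<or> (S = {} \<and> cyclic_on H \<sigma>))
     \<and> cyclic_on S (restr \<sigma> S \<circ> restr \<alpha> S)"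

definition covered_map :: "'a set \<Rightarrow> ('a \<Rightarrow> 'a) \<Rightarrow> ('a \<Rightarrow> 'a) \<Rightarrow> 'a \<Rightarrow> 'a set \<Rightarrow> bool" where
  "covered_map H \<sigma> \<alpha> r S \<longleftrightarrow> is_map H \<sigma> \<alpha> r \<and> S \<subseteq> H \<and> (\<forall>h\<in>S. \<alpha> h \<in> S)
     \<and> connecting_unicellular H \<sigma> \<alpha> S"

definition motion :: "('a \<Rightarrow> 'a) \<Rightarrow> ('a \<Rightarrow> 'a) \<Rightarrow> 'a set \<Rightarrow> 'a \<Rightarrow> 'a" where
  "motion \<sigma> \<alpha> S h = (if h \<in> S then \<sigma> (\<alpha> h) else \<sigma> h)"

definition motion_prec :: "('a \<Rightarrow> 'a) \<Rightarrow> ('a \<Rightarrow> 'a) \<Rightarrow> 'a \<Rightarrow> 'a set \<Rightarrow> 'a \<Rightarrow> 'a \<Rightarrow> bool" where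
  "motion_prec \<sigma> \<alpha> r S h k \<longleftrightarrow>
     (LEAST n. (motion \<sigma> \<alpha> S ^^ n) r = h) < (LEAST n. (motion \<sigma> \<alpha> S ^^ n) r = k)"

text \<open>The set I of the orientation \<Delta>(M,S) = (M,(I,O)), O = H - I.\<close>
definition Delta_In :: "'a set \<Rightarrow> ('a \<Rightarrow> 'a) \<Rightarrow> ('a \<Rightarrow> 'a) \<Rightarrow> 'a \<Rightarrow> 'a set \<Rightarrow> 'a set" where
  "Delta_In H \<sigma> \<alpha> r S =
     {h \<in> S. motion_prec \<sigma> \<alpha> r S (\<alpha> h) h} \<union> {h \<in> H - S. motion_prec \<sigma> \<alpha> r S h (\<alpha> h)}"

text \<open>Insert x just before r in the cycle of p containing r; fix y.\<close>
definition insert_before :: "('a \<Rightarrow> 'a) \<Rightarrow> 'a \<Rightarrow> 'a \<Rightarrow> 'a \<Rightarrow> 'a \<Rightarrow> 'a" where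
  "insert_before p r x y h =
     (if h = x then r else if h = y then y else if h = inv p r then x else p h)"

text \<open>Mobile Lambda2 of the oriented map (H,\<sigma>,\<alpha>) rooted at r with orientation (In, H - In),
  unfolded with new elements ii, oo: the rooted map (H', \<pi>, \<alpha>', ii).\<close>
definition Lambda2 :: "'a set \<Rightarrow> ('a \<Rightarrow> 'a) \<Rightarrow> ('a \<Rightarrow> 'a) \<Rightarrow> 'a \<Rightarrow> 'a set \<Rightarrow> 'a \<Rightarrow> 'a
     \<Rightarrow> 'a set \<times> ('a \<Rightarrow> 'a) \<times> ('a \<Rightarrow> 'a) \<times> 'a" where
  "Lambda2 H \<sigma> \<alpha> r In ii oo =
     (let \<sigma>' = insert_before \<sigma> r ii oo;
          \<phi>' = insert_before (\<sigma> \<circ> \<alpha>) r oo ii;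
          \<pi>c = restr \<sigma>' (In \<union> {ii});
          \<pi>b = restr \<phi>' ((H - In) \<union> {oo})
      in (H \<union> {ii, oo}, \<pi>c \<circ> inv \<pi>b, \<alpha>(ii := oo, oo := ii), ii))"

definition Psi2 :: "'a set \<Rightarrow> ('a \<Rightarrow> 'a) \<Rightarrow> ('a \<Rightarrow> 'a) \<Rightarrow> 'a \<Rightarrow> 'a set \<Rightarrow> 'a \<Rightarrow> 'a
     \<Rightarrow> 'a set \<times> ('a \<Rightarrow> 'a) \<times> ('a \<Rightarrow> 'a) \<times> 'a" where
  "Psi2 H \<sigma> \<alpha> r S ii oo = Lambda2 H \<sigma> \<alpha> r (Delta_In H \<sigma> \<alpha> r S) ii oo"

definition rooted_iso :: "'a set \<times> ('a \<Rightarrow> 'a) \<times> ('a \<Rightarrow> 'a) \<times> 'a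
     \<Rightarrow> 'a set \<times> ('a \<Rightarrow> 'a) \<times> ('a \<Rightarrow> 'a) \<times> 'a \<Rightarrow> bool" where
  "rooted_iso M1 M2 = (case M1 of (H1, s1, a1, r1) \<Rightarrow> case M2 of (H2, s2, a2, r2) \<Rightarrow>
     (\<exists>f. bij_betw f H1 H2 \<and> (\<forall>h\<in>H1. f (s1 h) = s2 (f h) \<and> f (a1 h) = a2 (f h))
          \<and> f r1 = r2))"

end

theory Submission
  imports Defs
begin

text \<open>The motion function of the dual covered map \<open>(M\<^sup>*, H - S)\<close> coincides with that of
  \<open>(M, S)\<close>, so both maps induce the same total order on \<open>H\<close>. Unicellularity makes every
  half-edge reachable from the root along the motion, so for each \<open>h\<close> exactly one of
  \<open>h\<close>, \<open>\<alpha> h\<close> comes first; hence the orientation of the dual is the reversed one, \<open>(O, I)\<close>.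
  Unfolding the dual map exchanges the roles of \<open>\<sigma>'\<close> and \<open>\<phi>'\<close> and of the new elements
  \<open>i\<close>, \<open>o\<close>, so its mobile is \<open>\<pi>\<^sub>\<bullet> \<pi>\<^sub>\<circ>\<^sup>-\<^sup>1 = \<pi>\<^sup>-\<^sup>1\<close>, rooted at \<open>o\<close>.\<close>

lemma permutes_funpow_reverse:
  assumes "p permutes A" "finite A"
  shows "\<exists>m. (p ^^ m) ((p ^^ n) x) = x"
proof -
  obtain q where q: "q > 0" "(p ^^ q) x = x"
    using permutation_self assms permutation_permutes by metis
  have period: "(p ^^ (q * k)) x = x" for k
    by (induction k) (simp_all add: funpow_add q(2))
  have "n \<le> q * n" using q(1) by simp
  then have "(p ^^ (q * n - n)) ((p ^^ n) x) = (p ^^ (q * n)) x"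
    by (metis funpow_add comp_apply le_add_diff_inverse2)
  then show ?thesis using period by metis
qed

lemma conjugate_inv_on:
  assumes f: "bij_betw f B A" and p: "p permutes B" and q: "q permutes A"
    and conj: "\<And>h. h \<in> B \<Longrightarrow> f (p h) = q (f h)" and h: "h \<in> B"
  shows "f (inv p h) = inv q (f h)"
proof -
  have "inv p h \<in> B" using p h by (simp add: permutes_in_image permutes_inv)
  then have "q (f (inv p h)) = f h" using conj p by (metis permutes_inverses(1))
  then show ?thesis using q by (metis permutes_inverses(2))
qed

section \<open>Restriction of a permutation\<close>

lemma restr_first_return:
  assumes "p permutes B" "finite B" "a \<in> A"
  defines "m \<equiv> LEAST k. 0 < k \<and> (p ^^ k) a \<in> A"
  shows "restr p A a = (p ^^ m) a" "0 < m" "(p ^^ m) a \<in> A"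
    "\<And>j. 0 < j \<Longrightarrow> j < m \<Longrightarrow> (p ^^ j) a \<notin> A"
proof -
  obtain n where "n > 0" "(p ^^ n) a = a"
    using permutation_self assms(1,2) permutation_permutes by metis
  then have ex: "0 < n \<and> (p ^^ n) a \<in> A" using assms(3) by simp
  show "restr p A a = (p ^^ m) a" using assms(3) unfolding restr_def m_def by simp
  show "0 < m" "(p ^^ m) a \<in> A"
    using LeastI[of "\<lambda>k. 0 < k \<and> (p ^^ k) a \<in> A", OF ex] unfolding m_def by auto
  show "(p ^^ j) a \<notin> A" if "0 < j" "j < m" for j
    using that not_less_Least[of j "\<lambda>k. 0 < k \<and> (p ^^ k) a \<in> A"] unfolding m_def by auto
qed

lemma restr_in:
  assumes "p permutes B" "finite B" "a \<in> A"
  shows "restr p A a \<in> A"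
  using restr_first_return[OF assms] by simp

text \<open>If two first returns coincide, the element with the longer return time passes
  through the other one on its way, which contradicts minimality unless they are equal.\<close>
lemma restr_inj_on:
  assumes p: "p permutes B" "finite B"
  shows "inj_on (restr p A) A"
proof -
  define ret where "ret a = (LEAST k. 0 < k \<and> (p ^^ k) a \<in> A)" for a
  have eq_if_le: "a = b"
    if ab: "a \<in> A" "b \<in> A" "restr p A a = restr p A b" and le: "ret a \<le> ret b" for a b
  proof -
    note fa = restr_first_return[OF p ab(1), folded ret_def]
    note fb = restr_first_return[OF p ab(2), folded ret_def]
    have "(p ^^ ret a) a = (p ^^ ret a) ((p ^^ (ret b - ret a)) b)"
      using ab(3) fa(1) fb(1) le by (metis funpow_add comp_apply le_add_diff_inverse)
    then have a: "a = (p ^^ (ret b - ret a)) b"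
      using inj_fn[OF permutes_inj[OF p(1)]] by (simp add: inj_eq)
    show "a = b"
      using fb(4)[of "ret b - ret a"] fa(2) a ab(1) by (cases "ret b - ret a = 0") auto
  qed
  show ?thesis
    by (rule inj_onI) (metis eq_if_le nle_le)
qed

lemma restr_permutes:
  assumes "p permutes B" "finite B" "A \<subseteq> B"
  shows "restr p A permutes A"
proof (rule bij_imp_permutes)
  have "restr p A ` A = A"
    using endo_inj_surj[OF finite_subset[OF assms(3,2)]] restr_in[OF assms(1,2)]
      restr_inj_on[OF assms(1,2)] by blast
  then show "bij_betw (restr p A) A A" using restr_inj_on[OF assms(1,2)] by (simp add: bij_betw_def)
  show "restr p A x = x" if "x \<notin> A" for x using that by (simp add: restr_def)
qed

lemma restr_conjugate:
  assumes inj: "inj_on f B" and pB: "\<And>h. h \<in> B \<Longrightarrow> p h \<in> B"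
    and conj: "\<And>h. h \<in> B \<Longrightarrow> f (p h) = q (f h)"
    and A: "A \<subseteq> B" and h: "h \<in> B"
  shows "f (restr p A h) = restr q (f ` A) (f h)"
proof -
  have inB: "(p ^^ k) h \<in> B" for k by (induction k) (auto simp: h pB)
  have iter: "f ((p ^^ k) h) = (q ^^ k) (f h)" for k
    by (induction k) (auto simp: conj inB)
  have mem: "x \<in> B \<Longrightarrow> f x \<in> f ` A \<longleftrightarrow> x \<in> A" for x
    using inj A by (auto dest: inj_onD)
  show ?thesis
    using mem[OF inB] mem[OF h] iter unfolding restr_def by simp
qed

section \<open>The motion function\<close>

lemma motion_dual:
  assumes "\<alpha> permutes H" "\<And>h. h \<in> H \<Longrightarrow> \<alpha> (\<alpha> h) = h" "S \<subseteq> H"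
  shows "motion (\<sigma> \<circ> \<alpha>) \<alpha> (H - S) = motion \<sigma> \<alpha> S"
  using assms permutes_not_in[OF assms(1)] permutes_in_image[OF assms(1)]
  by (intro ext) (auto simp: motion_def)

lemma motion_permutes:
  assumes \<sigma>: "\<sigma> permutes H" and \<alpha>: "\<alpha> permutes H"
    and inv: "\<And>h. h \<in> H \<Longrightarrow> \<alpha> (\<alpha> h) = h" and S: "S \<subseteq> H" "\<And>h. h \<in> S \<Longrightarrow> \<alpha> h \<in> S"
  shows "motion \<sigma> \<alpha> S permutes H"
proof -
  define g where "g h = (if h \<in> S then \<alpha> h else h)" for h
  have "g permutes H"
  proof (rule bij_imp_permutes)
    show "bij_betw g H H"
      by (rule bij_betw_byWitness[where f' = g])
        (use S inv permutes_in_image[OF \<alpha>] in \<open>auto simp: g_def\<close>)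
    show "g x = x" if "x \<notin> H" for x using that S by (auto simp: g_def)
  qed
  moreover have "motion \<sigma> \<alpha> S = \<sigma> \<circ> g" by (auto simp: motion_def g_def)
  ultimately show ?thesis using permutes_compose[OF _ \<sigma>] by simp
qed

lemma motion_funpow_outside:
  assumes "\<And>j. j < m \<Longrightarrow> (\<sigma> ^^ j) y \<notin> S"
  shows "(motion \<sigma> \<alpha> S ^^ m) y = (\<sigma> ^^ m) y"
  using assms by (induction m) (auto simp: motion_def)

lemma motion_reaches_set:
  assumes "(\<sigma> ^^ n) h \<in> S"
  shows "\<exists>n. (motion \<sigma> \<alpha> S ^^ n) h \<in> S"
proof -
  define m where "m = (LEAST n. (\<sigma> ^^ n) h \<in> S)"
  have "(\<sigma> ^^ m) h \<in> S" unfolding m_def using assms by (rule LeastI)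
  moreover have "(motion \<sigma> \<alpha> S ^^ m) h = (\<sigma> ^^ m) h"
    by (rule motion_funpow_outside) (auto simp: m_def dest: not_less_Least)
  ultimately show ?thesis by metis
qed

lemma motion_reaches_face_successor:
  assumes \<sigma>: "\<sigma> permutes H" "finite H" and S: "\<And>h. h \<in> S \<Longrightarrow> \<alpha> h \<in> S" and s: "s \<in> S"
  shows "\<exists>m. (motion \<sigma> \<alpha> S ^^ m) s = (restr \<sigma> S \<circ> restr \<alpha> S) s"
proof -
  have "(LEAST k. 0 < k \<and> (\<alpha> ^^ k) s \<in> S) = 1"
    by (rule Least_equality) (auto simp: S s)
  then have restr_\<alpha>: "restr \<alpha> S s = \<alpha> s" using s by (simp add: restr_def)
  define m where "m = (LEAST k. 0 < k \<and> (\<sigma> ^^ k) (\<alpha> s) \<in> S)"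
  note ret = restr_first_return[OF \<sigma> S[OF s], folded m_def]
  have m: "m = Suc (m - 1)" using ret(2) by simp
  have "motion \<sigma> \<alpha> S s = \<sigma> (\<alpha> s)" using s by (simp add: motion_def)
  then have "(motion \<sigma> \<alpha> S ^^ m) s = (motion \<sigma> \<alpha> S ^^ (m - 1)) (\<sigma> (\<alpha> s))"
    by (subst m) (simp only: funpow_Suc_right comp_apply)
  also have "\<dots> = (\<sigma> ^^ (m - 1)) (\<sigma> (\<alpha> s))"
    using ret(4)[of "Suc _"] by (intro motion_funpow_outside) (simp add: funpow_swap1)
  also have "\<dots> = (\<sigma> ^^ m) (\<alpha> s)"
    by (subst (2) m) (simp only: funpow_Suc_right comp_apply)
  finally have "(motion \<sigma> \<alpha> S ^^ m) s = (\<sigma> ^^ m) (\<alpha> s)" .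
  then show ?thesis using ret(1) restr_\<alpha> by auto
qed

lemma motion_reaches_within:
  assumes \<sigma>: "\<sigma> permutes H" "finite H" and \<alpha>: "\<alpha> permutes H"
    and S: "\<And>h. h \<in> S \<Longrightarrow> \<alpha> h \<in> S" and cyc: "cyclic_on S (restr \<sigma> S \<circ> restr \<alpha> S)"
    and st: "s \<in> S" "t \<in> S"
  shows "\<exists>m. (motion \<sigma> \<alpha> S ^^ m) s = t"
proof -
  let ?\<phi> = "restr \<sigma> S \<circ> restr \<alpha> S"
  have \<phi>_in: "(?\<phi> ^^ n) s \<in> S" for n
    by (induction n) (auto simp: st restr_in[OF \<sigma>] restr_in[OF \<alpha> \<sigma>(2)])
  have "\<exists>m. (motion \<sigma> \<alpha> S ^^ m) s = (?\<phi> ^^ n) s" for n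
  proof (induction n)
    case (Suc n)
    then obtain m where "(motion \<sigma> \<alpha> S ^^ m) s = (?\<phi> ^^ n) s" by blast
    moreover obtain m' where "(motion \<sigma> \<alpha> S ^^ m') ((?\<phi> ^^ n) s) = ?\<phi> ((?\<phi> ^^ n) s)"
      using motion_reaches_face_successor[where \<alpha> = \<alpha>, OF \<sigma> S \<phi>_in] by blast
    ultimately have "(motion \<sigma> \<alpha> S ^^ (m' + m)) s = (?\<phi> ^^ Suc n) s"
      by (simp only: funpow_add funpow.simps(2) comp_apply)
    then show ?case by blast
  qed (metis funpow_0)
  moreover obtain n where "(?\<phi> ^^ n) s = t" using cyc st unfolding cyclic_on_def by blast
  ultimately show ?thesis by metis
qed

text \<open>Since \<open>S\<close> meets every cycle of \<open>\<sigma>\<close>, the motion, which agrees with \<open>\<sigma>\<close> off \<open>S\<close>,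
  leads every element into \<open>S\<close>; there unicellularity lets it visit all of \<open>S\<close>, and as the
  motion permutes \<open>H\<close> it also leads back from \<open>S\<close> to every element.\<close>
lemma covered_map_motion_reaches:
  assumes "covered_map H \<sigma> \<alpha> r S" "k \<in> H"
  shows "\<exists>n. (motion \<sigma> \<alpha> S ^^ n) r = k"
proof -
  note cm = assms(1)[unfolded covered_map_def is_map_def connecting_unicellular_def]
  have fin: "finite H" and \<sigma>: "\<sigma> permutes H" and \<alpha>: "\<alpha> permutes H"
    and inv: "\<And>h. h \<in> H \<Longrightarrow> \<alpha> (\<alpha> h) = h" and r: "r \<in> H"
    and S: "S \<subseteq> H" "\<And>h. h \<in> S \<Longrightarrow> \<alpha> h \<in> S"
    and cyc: "cyclic_on S (restr \<sigma> S \<circ> restr \<alpha> S)"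
    using cm by auto
  let ?\<theta> = "motion \<sigma> \<alpha> S"
  show ?thesis
  proof (cases "\<forall>h\<in>H. \<exists>n. (\<sigma> ^^ n) h \<in> S")
    case False
    then have "S = {}" "cyclic_on H \<sigma>" using cm by auto
    moreover obtain n where "(\<sigma> ^^ n) r = k"
      using \<open>cyclic_on H \<sigma>\<close> r assms(2) unfolding cyclic_on_def by blast
    moreover have "motion \<sigma> \<alpha> {} = \<sigma>" by (simp add: motion_def fun_eq_iff)
    ultimately show ?thesis by metis
  next
    case True
    obtain a b where a: "(?\<theta> ^^ a) r \<in> S" and b: "(?\<theta> ^^ b) k \<in> S"
      using motion_reaches_set True r assms(2) by metis
    obtain c where "(?\<theta> ^^ c) ((?\<theta> ^^ a) r) = (?\<theta> ^^ b) k"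
      using motion_reaches_within[OF \<sigma> fin \<alpha> S(2) cyc a b] by blast
    moreover obtain d where "(?\<theta> ^^ d) ((?\<theta> ^^ b) k) = k"
      using permutes_funpow_reverse[OF motion_permutes[OF \<sigma> \<alpha> inv S] fin] by blast
    ultimately have "(?\<theta> ^^ (d + c + a)) r = k" by (simp add: funpow_add)
    then show ?thesis by blast
  qed
qed

section \<open>The orientation of the dual covered map\<close>

lemma motion_prec_asym_total:
  assumes reach: "\<And>k. k \<in> H \<Longrightarrow> \<exists>n. (motion \<sigma> \<alpha> S ^^ n) r = k"
    and hk: "h \<in> H" "k \<in> H" "h \<noteq> k"
  shows "motion_prec \<sigma> \<alpha> r S h k \<longleftrightarrow> \<not> motion_prec \<sigma> \<alpha> r S k h"
proof -
  define L where "L x = (LEAST n. (motion \<sigma> \<alpha> S ^^ n) r = x)" for x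
  have "(motion \<sigma> \<alpha> S ^^ L x) r = x" if "x \<in> H" for x
    unfolding L_def using reach[OF that] by (rule LeastI_ex)
  then have "L h \<noteq> L k" using hk by metis
  then show ?thesis unfolding motion_prec_def L_def[symmetric] by linarith
qed

lemma Delta_In_dual:
  assumes \<alpha>: "\<alpha> permutes H" "\<And>h. h \<in> H \<Longrightarrow> \<alpha> h \<noteq> h" "\<And>h. h \<in> H \<Longrightarrow> \<alpha> (\<alpha> h) = h"
    and S: "S \<subseteq> H"
    and reach: "\<And>k. k \<in> H \<Longrightarrow> \<exists>n. (motion \<sigma> \<alpha> S ^^ n) r = k"
  shows "Delta_In H (\<sigma> \<circ> \<alpha>) \<alpha> r (H - S) = H - Delta_In H \<sigma> \<alpha> r S"
proof -
  have "motion_prec (\<sigma> \<circ> \<alpha>) \<alpha> r (H - S) = motion_prec \<sigma> \<alpha> r S"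
    by (intro ext) (simp only: motion_prec_def motion_dual[OF \<alpha>(1,3) S])
  moreover have "motion_prec \<sigma> \<alpha> r S h (\<alpha> h) \<longleftrightarrow> \<not> motion_prec \<sigma> \<alpha> r S (\<alpha> h) h"
    if "h \<in> H" for h
    using motion_prec_asym_total[OF reach] that \<alpha>(2) permutes_in_image[OF \<alpha>(1)] by blast
  ultimately show ?thesis using S unfolding Delta_In_def by auto
qed

section \<open>Unfolding and the mobile\<close>

lemma insert_before_eq_comp_transpose:
  assumes "p permutes H" "r \<in> H" "x \<notin> H" "y \<notin> H" "x \<noteq> y"
  shows "insert_before p r x y = p \<circ> transpose x (inv p r)"
proof
  have "inv p r \<in> H" "p (inv p r) = r"
    using assms(1,2) by (simp_all add: permutes_in_image permutes_inv permutes_inverses)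
  then show "insert_before p r x y h = (p \<circ> transpose x (inv p r)) h" for h
    using assms permutes_not_in[OF assms(1)] by (auto simp: insert_before_def transpose_def)
qed

lemma insert_before_permutes:
  assumes "p permutes H" "r \<in> H" "x \<notin> H" "y \<notin> H" "x \<noteq> y"
  shows "insert_before p r x y permutes (H \<union> {x, y})"
proof -
  have "inv p r \<in> H" using assms(1,2) by (simp add: permutes_in_image permutes_inv)
  then have "transpose x (inv p r) permutes (H \<union> {x, y})" by (intro permutes_swap_id) auto
  moreover have "p permutes (H \<union> {x, y})" using assms(1) by (rule permutes_subset) auto
  ultimately show ?thesis
    unfolding insert_before_eq_comp_transpose[OF assms] by (rule permutes_compose)
qed

lemma insert_before_relabel:
  assumes p: "p permutes H" and fresh: "x \<notin> H" "y \<notin> H" "x \<noteq> y" "x' \<notin> H" "y' \<notin> H" "x' \<noteq> y'"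
    and f: "\<And>h. h \<in> H \<Longrightarrow> f h = h" "f x = x'" "f y = y'"
    and r: "r \<in> H" and h: "h \<in> H \<union> {x, y}"
  shows "f (insert_before p r x y h) = insert_before p r x' y' (f h)"
proof -
  have "inv p r \<in> H" using p r by (simp add: permutes_in_image permutes_inv)
  moreover have "h \<in> H \<Longrightarrow> p h \<in> H" using p by (simp add: permutes_in_image)
  ultimately show ?thesis
    using h fresh f r unfolding insert_before_def by auto
qed

lemma restr_comp_inv_conjugate:
  assumes f: "bij_betw f B' B" and fin: "finite B'" "finite B"
    and perm: "s' permutes B'" "p' permutes B'" "s permutes B" "p permutes B"
    and conj: "\<And>h. h \<in> B' \<Longrightarrow> f (s' h) = p (f h)" "\<And>h. h \<in> B' \<Longrightarrow> f (p' h) = s (f h)"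
    and XY: "X \<subseteq> B'" "Y \<subseteq> B'" and h: "h \<in> B'"
  shows "f ((restr s' X \<circ> inv (restr p' Y)) h) = (restr p (f ` X) \<circ> inv (restr s (f ` Y))) (f h)"
proof -
  have inj: "inj_on f B'" using f by (rule bij_betw_imp_inj_on)
  have fXY: "f ` X \<subseteq> B" "f ` Y \<subseteq> B" using XY f by (auto dest: bij_betw_imp_surj_on)
  have closed: "s' k \<in> B'" "p' k \<in> B'" if "k \<in> B'" for k
    using perm(1,2) that by (simp_all add: permutes_in_image)
  have conj_X: "f (restr s' X k) = restr p (f ` X) (f k)" if "k \<in> B'" for k
    using restr_conjugate[where p = s' and q = p, OF inj closed(1) conj(1) XY(1) that] .
  have "f (inv (restr p' Y) h) = inv (restr s (f ` Y)) (f h)"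
  proof (rule conjugate_inv_on[OF f _ _ _ h])
    show "restr p' Y permutes B'"
      using restr_permutes[OF perm(2) fin(1) XY(2)] XY(2) by (rule permutes_subset)
    show "restr s (f ` Y) permutes B"
      using restr_permutes[OF perm(3) fin(2) fXY(2)] fXY(2) by (rule permutes_subset)
    show "f (restr p' Y k) = restr s (f ` Y) (f k)" if "k \<in> B'" for k
      using restr_conjugate[where p = p' and q = s, OF inj closed(2) conj(2) XY(2) that] .
  qed
  moreover have "inv (restr p' Y) h \<in> B'"
    using permutes_subset[OF restr_permutes[OF perm(2) fin(1) XY(2)] XY(2)] h
    by (simp add: permutes_in_image permutes_inv)
  ultimately show ?thesis by (simp add: conj_X)
qed

definition relabel :: "'a \<Rightarrow> 'a \<Rightarrow> 'a \<Rightarrow> 'a \<Rightarrow> 'a \<Rightarrow> 'a" where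
  "relabel x y x' y' h = (if h = x then x' else if h = y then y' else h)"

lemma relabel_bij_betw:
  assumes "x \<notin> H" "y \<notin> H" "x \<noteq> y" "x' \<notin> H" "y' \<notin> H" "x' \<noteq> y'"
  shows "bij_betw (relabel x y x' y') (H \<union> {x, y}) (H \<union> {x', y'})"
  by (rule bij_betw_byWitness[where f' = "relabel x' y' x y"]) (use assms in \<open>auto simp: relabel_def\<close>)

text \<open>Exchanging the new elements matches the unfolding of \<open>\<phi>\<close> at \<open>(i\<^sub>2, o\<^sub>2)\<close> with
  that at \<open>(o, i)\<close>, and the unfolding of \<open>\<sigma>\<close> at \<open>(o\<^sub>2, i\<^sub>2)\<close> with that at \<open>(i, o)\<close>,
  so the two factors of the mobiles correspond crosswise.\<close>
lemma unfolded_mobile_relabel: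
  assumes \<sigma>: "\<sigma> permutes H" and \<phi>: "\<phi> permutes H"
    and fin: "finite H" and r: "r \<in> H" and In: "In \<subseteq> H"
    and fresh: "ii \<notin> H" "oo \<notin> H" "ii \<noteq> oo" "ii2 \<notin> H" "oo2 \<notin> H" "ii2 \<noteq> oo2"
    and h: "h \<in> H \<union> {ii2, oo2}"
  defines "f \<equiv> relabel ii2 oo2 oo ii"
  shows "f ((restr (insert_before \<phi> r ii2 oo2) (H - In \<union> {ii2})
            \<circ> inv (restr (insert_before \<sigma> r oo2 ii2) (In \<union> {oo2}))) h)
    = inv (restr (insert_before \<sigma> r ii oo) (In \<union> {ii})
            \<circ> inv (restr (insert_before \<phi> r oo ii) (H - In \<union> {oo}))) (f h)"
proof -
  let ?\<sigma>' = "insert_before \<sigma> r ii oo" and ?\<phi>' = "insert_before \<phi> r oo ii"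
  let ?\<phi>'\<^sub>2 = "insert_before \<phi> r ii2 oo2" and ?\<sigma>'\<^sub>2 = "insert_before \<sigma> r oo2 ii2"
  have f_bij: "bij_betw f (H \<union> {ii2, oo2}) (H \<union> {oo, ii})"
    unfolding f_def using fresh by (intro relabel_bij_betw) auto
  have f_H: "f k = k" if "k \<in> H" for k using that fresh by (auto simp: f_def relabel_def)
  have perm: "?\<phi>'\<^sub>2 permutes H \<union> {ii2, oo2}" "?\<sigma>'\<^sub>2 permutes H \<union> {ii2, oo2}"
      "?\<sigma>' permutes H \<union> {oo, ii}" "?\<phi>' permutes H \<union> {oo, ii}"
    using insert_before_permutes[OF \<phi> r fresh(4-6)]
      insert_before_permutes[OF \<sigma> r fresh(5,4) fresh(6)[symmetric]]
      insert_before_permutes[OF \<sigma> r fresh(1-3)]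
      insert_before_permutes[OF \<phi> r fresh(2,1) fresh(3)[symmetric]]
    by (simp_all add: insert_commute)
  have conj: "f (?\<phi>'\<^sub>2 k) = ?\<phi>' (f k)" "f (?\<sigma>'\<^sub>2 k) = ?\<sigma>' (f k)" if "k \<in> H \<union> {ii2, oo2}" for k
    using insert_before_relabel[OF \<phi> fresh(4-6) fresh(2,1) fresh(3)[symmetric] f_H _ _ r that]
      insert_before_relabel[OF \<sigma> fresh(5,4) fresh(6)[symmetric] fresh(1-3) f_H _ _ r]
      that fresh by (auto simp: f_def relabel_def insert_commute)
  have img: "f ` (H - In \<union> {ii2}) = H - In \<union> {oo}" "f ` (In \<union> {oo2}) = In \<union> {ii}"
    using In f_H fresh by (auto simp: f_def relabel_def image_iff)
  have fin': "finite (H \<union> {oo, ii})" "finite (H \<union> {ii2, oo2})" using fin by simp_all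
  have "bij (restr ?\<sigma>' (In \<union> {ii}))" "bij (restr ?\<phi>' (H - In \<union> {oo}))"
    by (rule permutes_bij, rule restr_permutes[OF perm(3) fin'(1)], use In in auto)
      (rule permutes_bij, rule restr_permutes[OF perm(4) fin'(1)], auto)
  then have inv_\<pi>: "inv (restr ?\<sigma>' (In \<union> {ii}) \<circ> inv (restr ?\<phi>' (H - In \<union> {oo})))
      = restr ?\<phi>' (H - In \<union> {oo}) \<circ> inv (restr ?\<sigma>' (In \<union> {ii}))"
    by (simp add: o_inv_distrib bij_imp_bij_inv inv_inv_eq)
  have XY: "H - In \<union> {ii2} \<subseteq> H \<union> {ii2, oo2}" "In \<union> {oo2} \<subseteq> H \<union> {ii2, oo2}"
    using In by auto
  show ?thesis
    using restr_comp_inv_conjugate[where s' = ?\<phi>'\<^sub>2 and p' = ?\<sigma>'\<^sub>2 and s = ?\<sigma>' and p = ?\<phi>',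
        OF f_bij fin'(2,1) perm conj XY h]
    unfolding img inv_\<pi> by (simp add: comp_def)
qed

lemma Lambda2_dual_reversed:
  assumes \<sigma>: "\<sigma> permutes H" and \<alpha>: "\<alpha> permutes H" "\<And>h. h \<in> H \<Longrightarrow> \<alpha> (\<alpha> h) = h"
    and fin: "finite H" and r: "r \<in> H" and In: "In \<subseteq> H"
    and fresh: "ii \<notin> H" "oo \<notin> H" "ii \<noteq> oo" "ii2 \<notin> H" "oo2 \<notin> H" "ii2 \<noteq> oo2"
  shows "case Lambda2 H \<sigma> \<alpha> r In ii oo of (H', \<pi>, \<alpha>', i) \<Rightarrow>
           rooted_iso (Lambda2 H (\<sigma> \<circ> \<alpha>) \<alpha> r (H - In) ii2 oo2) (H', inv \<pi>, \<alpha>', \<alpha>' i)"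
proof -
  let ?f = "relabel ii2 oo2 oo ii"
  have "\<alpha> (\<alpha> h) = h" for h
    using \<alpha>(2) permutes_not_in[OF \<alpha>(1)] by (cases "h \<in> H") auto
  then have \<sigma>\<alpha>\<alpha>: "\<sigma> \<circ> \<alpha> \<circ> \<alpha> = \<sigma>" by (simp add: fun_eq_iff)
  have \<alpha>_conj: "?f ((\<alpha>(ii2 := oo2, oo2 := ii2)) h) = (\<alpha>(ii := oo, oo := ii)) (?f h)"
    if "h \<in> H \<union> {ii2, oo2}" for h
  proof -
    have "k \<in> H \<Longrightarrow> \<alpha> k \<in> H" for k using \<alpha>(1) by (simp add: permutes_in_image)
    then show ?thesis using that fresh unfolding relabel_def by fastforce
  qed
  have "bij_betw ?f (H \<union> {ii2, oo2}) (H \<union> {ii, oo})"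
    using relabel_bij_betw[OF fresh(4-6) fresh(2,1) fresh(3)[symmetric]] by (simp add: insert_commute)
  moreover have "H - (H - In) = In" using In by auto
  ultimately show ?thesis
    unfolding Lambda2_def Let_def \<sigma>\<alpha>\<alpha> prod.case rooted_iso_def
    using unfolded_mobile_relabel[OF \<sigma> permutes_compose[OF \<alpha>(1) \<sigma>] fin r In fresh] \<alpha>_conj fresh(3)
    by (intro exI[of _ ?f]) (simp add: relabel_def)
qed

theorem mainTheorem13:
  fixes H :: "'a set" and \<sigma> \<alpha> :: "'a \<Rightarrow> 'a" and r :: 'a and S :: "'a set"
    and ii oo ii2 oo2 :: 'a
  assumes "covered_map H \<sigma> \<alpha> r S"
    and "ii \<notin> H" "oo \<notin> H" "ii \<noteq> oo"
    and "ii2 \<notin> H" "oo2 \<notin> H" "ii2 \<noteq> oo2"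
  shows "case Psi2 H \<sigma> \<alpha> r S ii oo of (H', \<pi>, \<alpha>', i) \<Rightarrow>
           rooted_iso (Psi2 H (\<sigma> \<circ> \<alpha>) \<alpha> r (H - S) ii2 oo2) (H', inv \<pi>, \<alpha>', \<alpha>' i)"
proof -
  have map: "finite H" "\<sigma> permutes H" "\<alpha> permutes H" "r \<in> H" "S \<subseteq> H"
    and \<alpha>: "\<And>h. h \<in> H \<Longrightarrow> \<alpha> h \<noteq> h" "\<And>h. h \<in> H \<Longrightarrow> \<alpha> (\<alpha> h) = h"
    using assms(1) unfolding covered_map_def is_map_def by auto
  have "Delta_In H (\<sigma> \<circ> \<alpha>) \<alpha> r (H - S) = H - Delta_In H \<sigma> \<alpha> r S"
    using Delta_In_dual[OF map(3) \<alpha> map(5) covered_map_motion_reaches[OF assms(1)]] .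
  moreover have "Delta_In H \<sigma> \<alpha> r S \<subseteq> H" using map(5) by (auto simp: Delta_In_def)
  ultimately show ?thesis
    unfolding Psi2_def using Lambda2_dual_reversed[OF map(2,3) \<alpha>(2) map(1,4) _ assms(2-7)] by simp
qed

end
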